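(* Let $X$ be a real random variable with $\mathbb{E}[e^X]=1$ and cumulative distribution function $F$, and assume there exists $\epsilon>0$ with $\mathbb{E}[e^{(1+\epsilon)X}]<\infty$. Let $c(k)=\int_k^\infty(e^x-e^k)\,dF(x)$ and let $V(k)$ be the implied volatility, i.e. the unique value with $c_{BS}(k,V(k))=c(k)$. If $-\log c\in R_\alpha$ for some $\alpha\ge1$, then as $k\to\infty$ $$\frac{\log c(k)}{k}=-\frac{k}{2V(k)^2}+\frac12-\frac{V(k)^2}{8k}+O\!\left(\frac{\log k}{k}\right)$$ and $$\frac{V(k)^2}{k}\sim\psi\!\left(\frac{-\log c(k)}{k}\right).$$
   Context: $c_{BS}(k,\sigma)=\Phi(d_1)-e^k\Phi(d_2)$ with $d_{1,2}=-k/\sigma\pm\sigma/2$, $\Phi$ the standard normal distribution function. $\psi:[0,\infty]\to[0,2]$, $\psi[x]=2-4\left(\sqrt{x^2+x}-x\right)$. A measurable function $g$, positive for large $x$, is in $R_\alpha$ if $\lim_{x\to\infty}g(\lambda x)/g(x)=\lambda^\alpha$ for every $\lambda>0$. $g\sim h$ means $g(k)/h(k)\to1$ as $k\to\infty$. *)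

theory Defs
  imports "HOL-Probability.Probability" "HOL-Library.Landau_Symbols"
begin

definition Phi :: "real \<Rightarrow> real" where
  "Phi x = measure (density lborel std_normal_density) {..x}"

definition c_BS :: "real \<Rightarrow> real \<Rightarrow> real" where
  "c_BS k \<sigma> = Phi (- k / \<sigma> + \<sigma> / 2) - exp k * Phi (- k / \<sigma> - \<sigma> / 2)"

definition implied_vol :: "real \<Rightarrow> real \<Rightarrow> real" where
  "implied_vol k p = (THE \<sigma>. \<sigma> > 0 \<and> c_BS k \<sigma> = p)"

definition psi :: "real \<Rightarrow> real" where
  "psi x = 2 - 4 * (sqrt (x\<^sup>2 + x) - x)"

definition regvar :: "real \<Rightarrow> (real \<Rightarrow> real) \<Rightarrow> bool" where
  "regvar \<alpha> g \<longleftrightarrow> g \<in> borel_measurable borel \<and> (\<forall>\<^sub>F x in at_top. g x > 0) \<and>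
     (\<forall>t>0. ((\<lambda>x. g (t * x) / g x) \<longlongrightarrow> t powr \<alpha>) at_top)"

end

theory Submission
  imports Defs "HOL-Real_Asymp.Real_Asymp"
begin

text \<open>
  For \<open>\<sigma>\<^sup>2 \<le> 2k\<close> the vega \<open>\<partial>c_BS/\<partial>\<sigma> = \<phi>(d\<^sub>1)\<close> is increasing in \<open>\<sigma>\<close>, so the Black-Scholes
  price lies between \<open>\<delta> \<phi>(d\<^sub>1(\<sigma> - \<delta>))\<close> and \<open>\<sigma> \<phi>(d\<^sub>1(\<sigma>))\<close>; taking \<open>\<delta> = \<sigma>\<^sup>3/k\<^sup>2\<close> gives
  \<open>log c_BS(k,\<sigma>) = -d\<^sub>1\<^sup>2/2 + O(log k)\<close> as long as \<open>log \<sigma> = O(log k)\<close>.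
  The moment condition gives \<open>c(k) \<le> M exp(-\<epsilon> k)\<close>, which keeps \<open>V(k)\<^sup>2 \<le> (2 - \<eta>) k\<close> in that
  range, and regular variation makes \<open>-log c\<close> polynomially bounded, which forces
  \<open>log V(k) = O(log k)\<close>. Hence \<open>log c(k) = -d\<^sub>1\<^sup>2/2 + O(log k)\<close> at \<open>\<sigma> = V(k)\<close>, the first claim.
  With \<open>v = V\<^sup>2/k\<close> one has \<open>d\<^sub>1\<^sup>2/(2k) = (2 - v)\<^sup>2/(8v)\<close>, whose inverse on \<open>(0,2)\<close> is \<open>\<psi>\<close>, and
  \<open>\<psi>(z)/\<psi>(y) \<rightarrow> 1\<close> when \<open>z - y \<rightarrow> 0\<close> with \<open>y\<close> bounded away from \<open>0\<close>.
\<close>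

section \<open>The standard normal distribution function\<close>

lemma real_distribution_std_normal: "real_distribution (density lborel std_normal_density)"
  unfolding real_distribution_def real_distribution_axioms_def
  using prob_space_normal_density by auto

lemma Phi_eq_cdf: "Phi x = cdf (density lborel std_normal_density) x"
  by (simp add: Phi_def cdf_def)

lemma Phi_tendsto_at_bot: "(Phi \<longlongrightarrow> 0) at_bot"
  using finite_borel_measure.cdf_lim_at_bot[OF
      real_distribution.finite_borel_measure_M[OF real_distribution_std_normal]]
  by (simp add: Phi_eq_cdf[abs_def])

lemma Phi_tendsto_at_top: "(Phi \<longlongrightarrow> 1) at_top"
  using real_distribution.cdf_lim_at_top_prob[OF real_distribution_std_normal]
  by (simp add: Phi_eq_cdf[abs_def])

lemma continuous_on_std_normal_density: "continuous_on S std_normal_density"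
  unfolding std_normal_density_def by (intro continuous_intros) auto

lemma Phi_diff_eq_integral:
  assumes "a \<le> x"
  shows "Phi x - Phi a = integral {a..x} std_normal_density"
proof -
  interpret real_distribution "density lborel std_normal_density"
    by (rule real_distribution_std_normal)
  have integrable: "std_normal_density integrable_on {a..x}"
    by (rule integrable_continuous_interval[OF continuous_on_std_normal_density])
  have "emeasure (density lborel std_normal_density) {a<..x}
      = (\<integral>\<^sup>+ y. ennreal (std_normal_density y) * indicator {a<..x} y \<partial>lborel)"
    by (subst emeasure_density) auto
  also have "\<dots> = (\<integral>\<^sup>+ y. ennreal (std_normal_density y) * indicator {a..x} y \<partial>lborel)"
    using AE_lborel_singleton[of a]
    by (intro nn_integral_cong_AE) (auto elim!: eventually_mono simp: indicator_def)
  also have "\<dots> = ennreal (integral {a..x} std_normal_density)"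
    using integrable by (intro nn_integral_has_integral_lebesgue') (auto simp: has_integral_integral)
  finally have "measure (density lborel std_normal_density) {a<..x} = integral {a..x} std_normal_density"
    using integral_nonneg[OF integrable] by (simp add: measure_def)
  moreover have "Phi x - Phi a = measure (density lborel std_normal_density) {a<..x}"
    using cdf_diff_eq[of a x] assms by (cases "a = x") (auto simp: Phi_eq_cdf)
  ultimately show ?thesis by simp
qed

lemma DERIV_Phi: "(Phi has_real_derivative std_normal_density t) (at t)"
proof -
  have "((\<lambda>x. Phi (t - 1) + integral {t - 1..x} std_normal_density)
      has_real_derivative std_normal_density t) (at t within {t - 1..t + 1})"
    using integral_has_real_derivative[OF continuous_on_std_normal_density[of "{t - 1..t + 1}"], of t]
    by (auto intro!: derivative_eq_intros)
  then have "(Phi has_real_derivative std_normal_density t) (at t within {t - 1..t + 1})"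
    by (rule has_field_derivative_transform_within[where d = 1])
      (auto simp: Phi_diff_eq_integral[symmetric])
  then show ?thesis using at_within_Icc_at[of "t - 1" t "t + 1"] by simp
qed

lemma DERIV_Phi_chain [derivative_intros]:
  "(g has_real_derivative g') (at x within S) \<Longrightarrow>
   ((\<lambda>x. Phi (g x)) has_real_derivative std_normal_density (g x) * g') (at x within S)"
  by (rule DERIV_chain2[OF DERIV_Phi])

lemma std_normal_density_pos: "std_normal_density x > 0"
  by (simp add: normal_density_pos)

lemma std_normal_density_mono_nonpos:
  fixes x y :: real
  assumes "x \<le> y" "y \<le> 0"
  shows "std_normal_density x \<le> std_normal_density y"
proof -
  have "y\<^sup>2 \<le> x\<^sup>2" unfolding abs_le_square_iff[symmetric] using assms by simp
  then show ?thesis unfolding std_normal_density_def by (intro mult_left_mono) auto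
qed

lemma ln_std_normal_density: "ln (std_normal_density x) = - ln (sqrt (2 * pi)) - x\<^sup>2 / 2"
  unfolding std_normal_density_def by (simp add: ln_mult ln_div)

lemma ln_sqrt_2pi_bounds: "0 \<le> ln (sqrt (2 * pi))" "ln (sqrt (2 * pi)) \<le> 2"
proof -
  have "1 \<le> sqrt (2 * pi)" using pi_gt3 by simp
  then show "0 \<le> ln (sqrt (2 * pi))" by simp
  have "sqrt (2 * pi) \<le> sqrt 9" using pi_less_4 by (intro real_sqrt_le_mono) simp
  also have "\<dots> \<le> exp 2" using exp_ge_add_one_self[of 2] by simp
  finally have "ln (sqrt (2 * pi)) \<le> ln (exp 2)" by (subst ln_le_cancel_iff) auto
  then show "ln (sqrt (2 * pi)) \<le> 2" by simp
qed

section \<open>The Black-Scholes price as a function of the volatility\<close>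

lemma std_normal_density_d2:
  fixes k s :: real
  assumes "s > 0"
  shows "exp k * std_normal_density (- k / s - s / 2) = std_normal_density (- k / s + s / 2)"
proof -
  have "(- k / s - s / 2)\<^sup>2 = (- k / s + s / 2)\<^sup>2 + 2 * k"
    using assms by (simp add: power2_eq_square field_simps)
  then have "exp k * exp (- (- k / s - s / 2)\<^sup>2 / 2) = exp (- (- k / s + s / 2)\<^sup>2 / 2)"
    by (simp add: exp_add[symmetric] field_simps)
  then show ?thesis unfolding std_normal_density_def by (metis mult.left_commute)
qed

lemma DERIV_c_BS:
  assumes "s > 0"
  shows "(c_BS k has_real_derivative std_normal_density (- k / s + s / 2)) (at s)"
proof -
  have "(c_BS k has_real_derivative
          std_normal_density (- k / s + s / 2) * (k / s\<^sup>2 + 1 / 2)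
          - exp k * (std_normal_density (- k / s - s / 2) * (k / s\<^sup>2 - 1 / 2))) (at s)"
    unfolding c_BS_def[abs_def] using assms
    by (auto intro!: derivative_eq_intros simp: power2_eq_square field_simps)
  also have "std_normal_density (- k / s + s / 2) * (k / s\<^sup>2 + 1 / 2)
          - exp k * (std_normal_density (- k / s - s / 2) * (k / s\<^sup>2 - 1 / 2))
        = std_normal_density (- k / s + s / 2)"
    using std_normal_density_d2[OF assms, of k] by (simp add: algebra_simps)
  finally show ?thesis .
qed

lemma c_BS_tendsto_0: "k > 0 \<Longrightarrow> (c_BS k \<longlongrightarrow> 0) (at_right 0)"
proof -
  assume "k > 0"
  then have "filterlim (\<lambda>s. - k / s + s / 2) at_bot (at_right 0)"
        and "filterlim (\<lambda>s. - k / s - s / 2) at_bot (at_right 0)"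
    by real_asymp+
  then have "((\<lambda>s. Phi (- k / s + s / 2) - exp k * Phi (- k / s - s / 2)) \<longlongrightarrow> 0 - exp k * 0)
      (at_right 0)"
    by (intro tendsto_intros filterlim_compose[OF Phi_tendsto_at_bot])
  then show ?thesis unfolding c_BS_def[abs_def] by simp
qed

lemma c_BS_tendsto_1: "k > 0 \<Longrightarrow> (c_BS k \<longlongrightarrow> 1) at_top"
proof -
  assume "k > 0"
  then have "filterlim (\<lambda>s. - k / s + s / 2) at_top at_top"
        and "filterlim (\<lambda>s. - k / s - s / 2) at_bot at_top"
    by real_asymp+
  then have "((\<lambda>s. Phi (- k / s + s / 2) - exp k * Phi (- k / s - s / 2)) \<longlongrightarrow> 1 - exp k * 0)
      at_top"
    by (intro tendsto_intros filterlim_compose[OF Phi_tendsto_at_top]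
        filterlim_compose[OF Phi_tendsto_at_bot])
  then show ?thesis unfolding c_BS_def[abs_def] by simp
qed

lemma c_BS_strict_mono:
  assumes "0 < a" "a < b"
  shows "c_BS k a < c_BS k b"
proof (rule DERIV_pos_imp_increasing[OF assms(2)])
  fix x assume "a \<le> x"
  with assms(1) have "x > 0" by simp
  then show "\<exists>y. (c_BS k has_real_derivative y) (at x) \<and> 0 < y"
    using DERIV_c_BS std_normal_density_pos by blast
qed

lemma c_BS_mono: "0 < a \<Longrightarrow> a \<le> b \<Longrightarrow> c_BS k a \<le> c_BS k b"
  using c_BS_strict_mono[of a b k] by (cases "a = b") auto

lemma c_BS_pos:
  assumes "k > 0" "s > 0"
  shows "c_BS k s > 0"
proof -
  have "\<forall>\<^sub>F x in at_right 0. c_BS k x \<le> c_BS k (s / 2)"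
    unfolding eventually_at_right_field using assms
    by (intro exI[of _ "s / 2"]) (auto intro: c_BS_mono)
  then have "0 \<le> c_BS k (s / 2)"
    by (intro tendsto_upperbound[OF c_BS_tendsto_0[OF assms(1)]]) auto
  also have "\<dots> < c_BS k s" using assms by (intro c_BS_strict_mono) auto
  finally show ?thesis .
qed

lemma c_BS_less_1:
  assumes "k > 0" "s > 0"
  shows "c_BS k s < 1"
proof -
  have "\<forall>\<^sub>F x in at_top. c_BS k (2 * s) \<le> c_BS k x"
    unfolding eventually_at_top_linorder using assms
    by (intro exI[of _ "2 * s"]) (auto intro: c_BS_mono)
  then have "c_BS k (2 * s) \<le> 1"
    by (intro tendsto_lowerbound[OF c_BS_tendsto_1[OF assms(1)]]) auto
  moreover have "c_BS k s < c_BS k (2 * s)" using assms by (intro c_BS_strict_mono) auto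
  ultimately show ?thesis by simp
qed

lemma implied_vol_spec:
  assumes "k > 0" "0 < p" "p < 1"
  shows "implied_vol k p > 0 \<and> c_BS k (implied_vol k p) = p"
proof -
  obtain a where a: "a > 0" "c_BS k a < p"
    using order_tendstoD(2)[OF c_BS_tendsto_0[OF assms(1)] assms(2)]
    unfolding eventually_at_right_field by (metis field_lbound_gt_zero)
  obtain b where b: "\<And>s. s \<ge> b \<Longrightarrow> p < c_BS k s"
    using order_tendstoD(1)[OF c_BS_tendsto_1[OF assms(1)] assms(3)]
    unfolding eventually_at_top_linorder by blast
  have cont: "continuous_on {a..max a b} (c_BS k)"
  proof (intro continuous_at_imp_continuous_on ballI)
    fix x assume "x \<in> {a..max a b}"
    with a(1) show "isCont (c_BS k) x" using DERIV_c_BS[of x k] DERIV_isCont by auto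
  qed
  have "c_BS k a \<le> p" "p \<le> c_BS k (max a b)" "a \<le> max a b"
    using a(2) b[of "max a b"] by auto
  from IVT'[OF this cont] obtain s where "a \<le> s" "c_BS k s = p" by blast
  with a(1) have s: "s > 0 \<and> c_BS k s = p" by linarith
  have "t = s" if "t > 0 \<and> c_BS k t = p" for t
    using c_BS_strict_mono[of s t k] c_BS_strict_mono[of t s k] that s
    by (cases s t rule: linorder_cases) auto
  with s show ?thesis
    unfolding implied_vol_def by (rule theI[where P = "\<lambda>\<sigma>. \<sigma> > 0 \<and> c_BS k \<sigma> = p"])
qed

section \<open>Logarithmic estimates of the price for \<open>\<sigma>\<^sup>2 \<le> 2k\<close>\<close>

lemma ln_ge_1: "3 \<le> k \<Longrightarrow> 1 \<le> ln (k :: real)"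
  using exp_le by (subst ln_ge_iff) auto

lemma d1_mono:
  fixes k s t :: real
  assumes "k > 0" "0 < s" "s \<le> t"
  shows "- k / s + s / 2 \<le> - k / t + t / 2"
proof -
  have "k / t \<le> k / s" using assms by (intro divide_left_mono) auto
  then show ?thesis using assms by simp
qed

lemma d1_nonpos:
  fixes k s :: real
  assumes "0 < s" "s\<^sup>2 \<le> 2 * k"
  shows "- k / s + s / 2 \<le> 0"
proof -
  have "- k / s + s / 2 = (s\<^sup>2 - 2 * k) / (2 * s)"
    using assms by (simp add: field_simps power2_eq_square)
  also have "\<dots> \<le> 0" using assms by (intro divide_nonpos_pos) auto
  finally show ?thesis .
qed

lemma d1_sq_half: "s > 0 \<Longrightarrow> (- k / s + s / 2)\<^sup>2 / 2 = k\<^sup>2 / (2 * s\<^sup>2) - k / 2 + s\<^sup>2 / 8"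
  for k s :: real
  by (simp add: power2_eq_square field_simps)

lemma c_BS_le:
  assumes k: "k > 0" and s: "s > 0" "s\<^sup>2 \<le> 2 * k"
  shows "c_BS k s \<le> s * std_normal_density (- k / s + s / 2)"
proof -
  define C where "C = std_normal_density (- k / s + s / 2)"
  define h where "h = (\<lambda>x. c_BS k x - x * C)"
  have "h s \<le> h x" if "0 < x" "x \<le> s" for x
  proof (rule DERIV_nonpos_imp_nonincreasing[OF that(2)])
    fix y assume y: "x \<le> y" "y \<le> s"
    have "(h has_real_derivative std_normal_density (- k / y + y / 2) - C) (at y)"
      unfolding h_def using that y by (auto intro!: derivative_eq_intros DERIV_c_BS)
    moreover have "std_normal_density (- k / y + y / 2) \<le> C"
      unfolding C_def using that y k d1_nonpos[OF s]
      by (intro std_normal_density_mono_nonpos d1_mono) auto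
    ultimately show "\<exists>D. (h has_real_derivative D) (at y) \<and> D \<le> 0" by force
  qed
  then have "\<forall>\<^sub>F x in at_right 0. h s \<le> h x"
    unfolding eventually_at_right_field using s by (intro exI[of _ s]) auto
  moreover have "(h \<longlongrightarrow> 0 - 0 * C) (at_right 0)"
    unfolding h_def by (intro tendsto_intros c_BS_tendsto_0 k)
  ultimately have "h s \<le> 0" using tendsto_lowerbound[of h 0 "at_right 0"] by simp
  then show ?thesis unfolding h_def C_def by simp
qed

lemma c_BS_ge:
  assumes k: "k > 0" and \<delta>: "0 < \<delta>" "\<delta> < s" and s: "s\<^sup>2 \<le> 2 * k"
  shows "\<delta> * std_normal_density (- k / (s - \<delta>) + (s - \<delta>) / 2) \<le> c_BS k s"
proof -
  define C where "C = std_normal_density (- k / (s - \<delta>) + (s - \<delta>) / 2)"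
  define h where "h = (\<lambda>x. c_BS k x - x * C)"
  have "h (s - \<delta>) \<le> h s"
  proof (rule DERIV_nonneg_imp_nondecreasing[of "s - \<delta>" s])
    fix y assume y: "s - \<delta> \<le> y" "y \<le> s"
    have "(h has_real_derivative std_normal_density (- k / y + y / 2) - C) (at y)"
      unfolding h_def using \<delta> y by (auto intro!: derivative_eq_intros DERIV_c_BS)
    moreover have "C \<le> std_normal_density (- k / y + y / 2)"
      unfolding C_def using \<delta> y d1_nonpos[of s k] s
      by (intro std_normal_density_mono_nonpos d1_mono k order.trans[OF d1_mono[OF k, of y s]])
        auto
    ultimately show "\<exists>D. (h has_real_derivative D) (at y) \<and> D \<ge> 0" by force
  qed (use \<delta> in simp)
  moreover have "c_BS k (s - \<delta>) > 0" using \<delta> k by (intro c_BS_pos) auto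
  ultimately show ?thesis unfolding h_def C_def by (simp add: algebra_simps)
qed

lemma ln_c_BS_le:
  assumes k: "k > 0" and s: "s > 0" "s\<^sup>2 \<le> 2 * k"
  shows "ln (c_BS k s) + (k\<^sup>2 / (2 * s\<^sup>2) - k / 2 + s\<^sup>2 / 8) \<le> ln s - ln (sqrt (2 * pi))"
proof -
  have "ln (c_BS k s) \<le> ln (s * std_normal_density (- k / s + s / 2))"
    using c_BS_le[OF k s] c_BS_pos[OF k s(1)] by simp
  also have "\<dots> = ln s - ln (sqrt (2 * pi)) - (- k / s + s / 2)\<^sup>2 / 2"
    using s by (simp add: ln_mult_pos std_normal_density_pos ln_std_normal_density)
  finally show ?thesis using d1_sq_half[OF s(1), of k] by linarith
qed

lemma inverse_one_minus_sq_le: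
  fixes u :: real
  assumes "0 \<le> u" "u \<le> 1 / 2"
  shows "1 / (1 - u)\<^sup>2 \<le> 1 + 8 * u"
proof -
  have "(1 + 8 * u) * (1 - u)\<^sup>2 = 1 + u * ((1 - 2 * u) * (6 - 4 * u) + u)"
    by (simp add: power2_eq_square algebra_simps)
  also have "\<dots> \<ge> 1"
  proof -
    have "0 \<le> u * ((1 - 2 * u) * (6 - 4 * u) + u)"
      using assms by (intro mult_nonneg_nonneg add_nonneg_nonneg) auto
    then show ?thesis by simp
  qed
  finally show ?thesis using assms by (simp add: pos_divide_le_eq)
qed

lemma sq_vol_le_sq_strike:
  fixes k s :: real
  assumes "4 \<le> k" "s\<^sup>2 \<le> 2 * k"
  shows "2 * s\<^sup>2 \<le> k\<^sup>2"
proof -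
  have "4 * k \<le> k * k" using assms(1) by (intro mult_right_mono) auto
  then show ?thesis using assms(2) unfolding power2_eq_square by linarith
qed

lemma vol_le_strike:
  fixes k s :: real
  assumes "4 \<le> k" "s\<^sup>2 \<le> 2 * k"
  shows "s \<le> k"
proof (rule power2_le_imp_le)
  show "s\<^sup>2 \<le> k\<^sup>2" using sq_vol_le_sq_strike[OF assms] zero_le_power2[of s] by linarith
  show "0 \<le> k" using assms(1) by simp
qed

lemma ln_c_BS_ge:
  assumes k: "k \<ge> 4" and s: "s > 0" "s\<^sup>2 \<le> 2 * k"
  shows "3 * ln s - 2 * ln k - ln (sqrt (2 * pi)) - 4
    \<le> ln (c_BS k s) + (k\<^sup>2 / (2 * s\<^sup>2) - k / 2 + s\<^sup>2 / 8)"
proof -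
  \<comment> \<open>\<open>\<delta> = s\<^sup>3/k\<^sup>2\<close> keeps \<open>log \<delta> = O(log k)\<close> while moving \<open>d\<^sub>1\<^sup>2/2\<close> by at most 4.\<close>
  define u where "u = s\<^sup>2 / k\<^sup>2"
  define \<delta> where "\<delta> = s * u"
  define \<tau> where "\<tau> = s - \<delta>"
  have k0: "0 < k" using k by simp
  have u: "0 < u" "u \<le> 1 / 2"
    using sq_vol_le_sq_strike[OF k s(2)] s k0 by (simp_all add: u_def pos_divide_le_eq)
  have \<delta>: "0 < \<delta>" "\<delta> < s" using s u by (simp_all add: \<delta>_def)
  have \<tau>: "\<tau> = s * (1 - u)" "0 < \<tau>" "\<tau> \<le> s"
    using \<delta> by (simp_all add: \<tau>_def \<delta>_def algebra_simps)
  have "k\<^sup>2 / (2 * \<tau>\<^sup>2) = k\<^sup>2 / (2 * s\<^sup>2) * (1 / (1 - u)\<^sup>2)"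
    unfolding \<tau>(1) by (simp add: power_mult_distrib)
  also have "\<dots> \<le> k\<^sup>2 / (2 * s\<^sup>2) * (1 + 8 * u)"
    using u by (intro mult_left_mono inverse_one_minus_sq_le) auto
  also have "\<dots> = k\<^sup>2 / (2 * s\<^sup>2) + 4" using k0 s by (simp add: u_def field_simps)
  finally have rate: "k\<^sup>2 / (2 * \<tau>\<^sup>2) \<le> k\<^sup>2 / (2 * s\<^sup>2) + 4" .
  have "\<tau>\<^sup>2 \<le> s\<^sup>2" using \<tau> by (intro power_mono) auto
  moreover have "ln \<delta> = 3 * ln s - 2 * ln k"
    using s k0 by (simp add: \<delta>_def u_def ln_mult ln_div ln_realpow)
  ultimately have "3 * ln s - 2 * ln k - ln (sqrt (2 * pi)) - 4 - (k\<^sup>2 / (2 * s\<^sup>2) - k / 2 + s\<^sup>2 / 8)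
      \<le> ln \<delta> - ln (sqrt (2 * pi)) - (- k / \<tau> + \<tau> / 2)\<^sup>2 / 2"
    using rate d1_sq_half[OF \<tau>(2), of k] by linarith
  also have "\<dots> = ln (\<delta> * std_normal_density (- k / \<tau> + \<tau> / 2))"
    using \<delta> by (simp add: ln_mult_pos std_normal_density_pos ln_std_normal_density)
  also have "\<dots> \<le> ln (c_BS k s)"
    using c_BS_ge[OF k0 \<delta> s(2)] c_BS_pos[OF k0 s(1)] \<delta>
    by (simp add: \<tau>_def std_normal_density_pos)
  finally show ?thesis by simp
qed

lemma ln_add_le_ln_2_max:
  fixes x y :: real
  assumes "0 < x" "0 < y"
  shows "ln (x + y) \<le> ln 2 + max (ln x) (ln y)"
proof -
  have "ln (x + y) \<le> ln (2 * max x y)" using assms by simp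
  also have "\<dots> = ln 2 + ln (max x y)" using assms by (intro ln_mult_pos) auto
  also have "ln (max x y) = max (ln x) (ln y)" using assms by (simp add: max_def)
  finally show ?thesis .
qed

lemma ln_vol_lower:
  assumes k: "k \<ge> 4" and s: "s > 0" "s\<^sup>2 \<le> 2 * k"
    and growth: "ln (- ln (c_BS k s)) \<le> A + B * ln k"
  shows "- ln s \<le> (3 + \<bar>A\<bar> + \<bar>B\<bar>) * ln k"
proof -
  define g where "g = - ln (c_BS k s)"
  have g: "g > 0" using c_BS_pos[of k s] c_BS_less_1[of k s] k s by (simp add: g_def)
  have lnk: "1 \<le> ln k" using k by (intro ln_ge_1) simp
  have ln2: "ln (2 :: real) \<le> 1" using ln_le_minus_one[of 2] by simp
  have k0: "0 < k" using k by simp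
  \<comment> \<open>The upper estimate bounds \<open>k\<^sup>2/(2s\<^sup>2)\<close> by \<open>-log c_BS(k,s) + 2k\<close>, a polynomial in \<open>k\<close>.\<close>
  have "ln s \<le> k" using ln_less_self[OF s(1)] vol_le_strike[OF k s(2)] by linarith
  then have "k\<^sup>2 / (2 * s\<^sup>2) \<le> g + 2 * k"
    using ln_c_BS_le[OF k0 s] k s ln_sqrt_2pi_bounds zero_le_power2[of s]
    unfolding g_def by linarith
  then have "ln (k\<^sup>2 / (2 * s\<^sup>2)) \<le> ln (g + 2 * k)"
    using k0 s g by (subst ln_le_cancel_iff) auto
  also have "\<dots> \<le> ln 2 + max (ln g) (ln (2 * k))" using g k0 by (intro ln_add_le_ln_2_max) auto
  also have "max (ln g) (ln (2 * k)) \<le> \<bar>A\<bar> + \<bar>B\<bar> * ln k + 1 + ln k"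
  proof (rule max.boundedI)
    have "B * ln k \<le> \<bar>B\<bar> * ln k" using lnk by (intro mult_right_mono) auto
    then show "ln g \<le> \<bar>A\<bar> + \<bar>B\<bar> * ln k + 1 + ln k"
      using growth lnk abs_ge_self[of A] unfolding g_def by linarith
    have "ln (2 * k) = ln 2 + ln k" using k0 by (intro ln_mult_pos) auto
    moreover have "0 \<le> \<bar>B\<bar> * ln k" using lnk by simp
    ultimately show "ln (2 * k) \<le> \<bar>A\<bar> + \<bar>B\<bar> * ln k + 1 + ln k"
      using ln2 abs_ge_zero[of A] by linarith
  qed
  moreover have "ln (k\<^sup>2 / (2 * s\<^sup>2)) = 2 * ln k - ln 2 - 2 * ln s"
    using s k0 by (simp add: ln_div ln_mult ln_realpow)
  moreover have "\<bar>A\<bar> \<le> \<bar>A\<bar> * ln k" "0 \<le> \<bar>B\<bar> * ln k"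
    using lnk by (auto simp: mult_le_cancel_left1)
  moreover have "(3 + \<bar>A\<bar> + \<bar>B\<bar>) * ln k = 3 * ln k + \<bar>A\<bar> * ln k + \<bar>B\<bar> * ln k"
    by (simp add: algebra_simps)
  ultimately show ?thesis using lnk ln2 by linarith
qed

lemma ln_c_BS_expansion:
  assumes k: "k \<ge> 4" and s: "s > 0" "s\<^sup>2 \<le> 2 * k"
    and growth: "ln (- ln (c_BS k s)) \<le> A + B * ln k"
  shows "\<bar>ln (c_BS k s) + (k\<^sup>2 / (2 * s\<^sup>2) - k / 2 + s\<^sup>2 / 8)\<bar>
    \<le> (3 * (3 + \<bar>A\<bar> + \<bar>B\<bar>) + 8) * ln k"
proof (rule abs_leI)
  have lnk: "1 \<le> ln k" using k by (intro ln_ge_1) simp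
  have "ln s \<le> ln k" using vol_le_strike[OF k s(2)] s by simp
  moreover have "0 \<le> (3 + \<bar>A\<bar> + \<bar>B\<bar>) * ln k" using lnk by simp
  moreover have "(3 * (3 + \<bar>A\<bar> + \<bar>B\<bar>) + 8) * ln k = 3 * ((3 + \<bar>A\<bar> + \<bar>B\<bar>) * ln k) + 8 * ln k"
    by (simp add: algebra_simps)
  moreover note ln_c_BS_le[of k s] ln_c_BS_ge[OF k s] ln_vol_lower[OF k s growth]
    ln_sqrt_2pi_bounds
  ultimately show "ln (c_BS k s) + (k\<^sup>2 / (2 * s\<^sup>2) - k / 2 + s\<^sup>2 / 8)
      \<le> (3 * (3 + \<bar>A\<bar> + \<bar>B\<bar>) + 8) * ln k"
    and "- (ln (c_BS k s) + (k\<^sup>2 / (2 * s\<^sup>2) - k / 2 + s\<^sup>2 / 8))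
      \<le> (3 * (3 + \<bar>A\<bar> + \<bar>B\<bar>) + 8) * ln k"
    using k s lnk by linarith+
qed

lemma ln_c_BS_ge_large_vol:
  assumes k: "k \<ge> 4" and \<eta>: "0 < \<eta>" "\<eta> \<le> 1" and s: "s > 0" "(2 - \<eta>) * k \<le> s\<^sup>2"
  shows "- \<eta> * k / 8 - ln k / 2 - 6 \<le> ln (c_BS k s)"
proof -
  define \<sigma> where "\<sigma> = sqrt ((2 - \<eta>) * k)"
  have \<sigma>: "\<sigma> > 0" "\<sigma>\<^sup>2 = (2 - \<eta>) * k" using \<eta> k by (auto simp: \<sigma>_def)
  have "\<sigma> \<le> sqrt (s\<^sup>2)" unfolding \<sigma>_def using s by (intro real_sqrt_le_mono)
  then have "c_BS k \<sigma> \<le> c_BS k s" using s \<sigma> by (intro c_BS_mono) auto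
  moreover have "0 < c_BS k \<sigma>" using k \<sigma> by (intro c_BS_pos) auto
  ultimately have "ln (c_BS k \<sigma>) \<le> ln (c_BS k s)" by simp
  moreover have "k\<^sup>2 / (2 * \<sigma>\<^sup>2) - k / 2 + \<sigma>\<^sup>2 / 8 = \<eta> * k * (\<eta> / (8 * (2 - \<eta>)))"
    unfolding \<sigma>(2) using \<eta> k by (simp add: field_simps power2_eq_square)
  moreover have "\<eta> * k * (\<eta> / (8 * (2 - \<eta>))) \<le> \<eta> * k * (1 / 8)"
    using \<eta> k by (intro mult_left_mono) (auto simp: field_simps)
  moreover have "ln k \<le> ln (\<sigma>\<^sup>2)" using \<sigma> \<eta> k by (subst ln_le_cancel_iff) auto
  moreover have "ln (\<sigma>\<^sup>2) = 2 * ln \<sigma>" using \<sigma>(1) by (simp add: ln_realpow)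
  moreover have "\<sigma>\<^sup>2 \<le> 2 * k" using \<sigma> \<eta> k by simp
  then have "3 * ln \<sigma> - 2 * ln k - ln (sqrt (2 * pi)) - 4
      \<le> ln (c_BS k \<sigma>) + (k\<^sup>2 / (2 * \<sigma>\<^sup>2) - k / 2 + \<sigma>\<^sup>2 / 8)"
    by (rule ln_c_BS_ge[OF k \<sigma>(1)])
  moreover have "- \<eta> * k / 8 = - (\<eta> * k * (1 / 8))" by simp
  ultimately show ?thesis using ln_sqrt_2pi_bounds by linarith
qed

section \<open>The function \<open>\<psi>\<close>\<close>

lemma psi_inverse:
  fixes v :: real
  assumes "0 < v" "v < 2"
  shows "psi ((2 - v)\<^sup>2 / (8 * v)) = v"
proof -
  define z where "z = (2 - v)\<^sup>2 / (8 * v)"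
  have z: "0 \<le> z" "(2 - v)\<^sup>2 = 8 * v * z" using assms by (auto simp: z_def)
  have "((2 + 4 * z) - v)\<^sup>2 = (2 - v)\<^sup>2 + 8 * z * (2 - v) + 16 * z\<^sup>2"
    by (simp add: power2_eq_square algebra_simps)
  also have "\<dots> = (4 * sqrt (z\<^sup>2 + z))\<^sup>2"
    using z by (simp add: algebra_simps)
  finally have "(2 + 4 * z) - v = 4 * sqrt (z\<^sup>2 + z)"
    using assms z by (subst (asm) power2_eq_iff_nonneg) auto
  then show ?thesis unfolding psi_def z_def[symmetric] by simp
qed

lemma psi_eq_divide:
  fixes x :: real
  assumes "0 \<le> x"
  shows "psi x = 2 / (1 + 2 * x + 2 * sqrt (x\<^sup>2 + x))"
proof -
  define r where "r = sqrt (x\<^sup>2 + x)"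
  have r: "0 \<le> r" "r\<^sup>2 = x\<^sup>2 + x" using assms by (auto simp: r_def)
  have "(2 - 4 * (r - x)) * (1 + 2 * x + 2 * r) = 2 * (1 + 2 * x)\<^sup>2 - 8 * r\<^sup>2"
    by (simp add: power2_eq_square algebra_simps)
  also have "\<dots> = 2" using r(2) by (simp add: power2_eq_square algebra_simps)
  finally show ?thesis
    using assms r(1) unfolding psi_def r_def[symmetric] by (simp add: eq_divide_eq)
qed

lemma sqrt_sq_add_self_diff_le:
  fixes e y z :: real
  assumes e: "0 < e" "e \<le> y" and z: "0 \<le> z"
  shows "\<bar>sqrt (z\<^sup>2 + z) - sqrt (y\<^sup>2 + y)\<bar> \<le> (1 + 1 / e) * \<bar>z - y\<bar>"
proof -
  define a b where "a = sqrt (z\<^sup>2 + z)" and "b = sqrt (y\<^sup>2 + y)"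
  have a: "z \<le> a" "a\<^sup>2 = z\<^sup>2 + z" using z by (auto simp: a_def real_le_rsqrt)
  have b: "y \<le> b" "b\<^sup>2 = y\<^sup>2 + y" using e by (auto simp: b_def real_le_rsqrt)
  have ab: "e \<le> a + b" "0 < a + b" using a b e z by linarith+
  have "(a - b) * (a + b) = (z - y) * (z + y + 1)"
    using a(2) b(2) by (simp add: power2_eq_square algebra_simps)
  moreover have "0 \<le> z + y + 1" using e z by linarith
  ultimately have "\<bar>a - b\<bar> * (a + b) = \<bar>z - y\<bar> * (z + y + 1)"
    using ab by (metis abs_mult abs_of_nonneg abs_of_pos)
  also have "\<dots> \<le> \<bar>z - y\<bar> * (a + b + 1)" using a b by (intro mult_left_mono) auto
  finally have "\<bar>a - b\<bar> \<le> \<bar>z - y\<bar> * (1 + 1 / (a + b))"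
    using ab by (simp add: field_simps)
  also have "\<dots> \<le> \<bar>z - y\<bar> * (1 + 1 / e)"
    using ab e by (intro mult_left_mono add_left_mono divide_left_mono) auto
  finally show ?thesis by (simp add: a_def b_def mult.commute)
qed

lemma psi_ratio_minus_1_le:
  fixes e y z :: real
  assumes e: "0 < e" "e \<le> y" and z: "0 \<le> z"
  shows "\<bar>psi z / psi y - 1\<bar> \<le> (4 + 2 / e) * \<bar>z - y\<bar>"
proof -
  define Q where "Q = (\<lambda>t::real. 1 + 2 * t + 2 * sqrt (t\<^sup>2 + t))"
  have Q: "1 \<le> Q z" "0 < Q z" "0 < Q y" using e z by (simp_all add: Q_def add_pos_nonneg)
  have "0 \<le> y" using e by simp
  then have "psi z / psi y - 1 = (Q y - Q z) / Q z"
    using z Q by (simp add: psi_eq_divide Q_def field_simps)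
  then have "\<bar>psi z / psi y - 1\<bar> = \<bar>Q z - Q y\<bar> / Q z"
    using Q by (simp add: abs_minus_commute)
  also have "\<dots> \<le> \<bar>Q z - Q y\<bar>"
    using Q divide_left_mono[of 1 "Q z" "\<bar>Q z - Q y\<bar>"] by simp
  also have "Q z - Q y = 2 * (z - y) + 2 * (sqrt (z\<^sup>2 + z) - sqrt (y\<^sup>2 + y))"
    unfolding Q_def by simp
  also have "\<bar>\<dots>\<bar> \<le> \<bar>2 * (z - y)\<bar> + \<bar>2 * (sqrt (z\<^sup>2 + z) - sqrt (y\<^sup>2 + y))\<bar>"
    by (rule abs_triangle_ineq)
  also have "\<dots> = 2 * \<bar>z - y\<bar> + 2 * \<bar>sqrt (z\<^sup>2 + z) - sqrt (y\<^sup>2 + y)\<bar>"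
    by (simp only: abs_mult abs_numeral)
  also have "\<dots> \<le> 2 * \<bar>z - y\<bar> + 2 * ((1 + 1 / e) * \<bar>z - y\<bar>)"
    using sqrt_sq_add_self_diff_le[OF e z] by simp
  also have "\<dots> = (4 + 2 / e) * \<bar>z - y\<bar>" by (simp add: algebra_simps)
  finally show ?thesis .
qed

lemma psi_ratio_tendsto_1:
  fixes y z :: "'a \<Rightarrow> real"
  assumes e: "0 < e" and y: "\<forall>\<^sub>F x in F. e \<le> y x" and z: "\<forall>\<^sub>F x in F. 0 \<le> z x"
    and zy: "((\<lambda>x. z x - y x) \<longlongrightarrow> 0) F"
  shows "((\<lambda>x. psi (z x) / psi (y x)) \<longlongrightarrow> 1) F"
proof (rule LIM_zero_cancel)
  have "\<forall>\<^sub>F x in F. norm (psi (z x) / psi (y x) - 1) \<le> (4 + 2 / e) * \<bar>z x - y x\<bar>"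
    using y z by eventually_elim (use psi_ratio_minus_1_le[OF e] in simp)
  moreover have "((\<lambda>x. (4 + 2 / e) * \<bar>z x - y x\<bar>) \<longlongrightarrow> (4 + 2 / e) * \<bar>0\<bar>) F"
    by (intro tendsto_intros zy)
  then have "((\<lambda>x. (4 + 2 / e) * \<bar>z x - y x\<bar>) \<longlongrightarrow> 0) F" by simp
  ultimately show "((\<lambda>x. psi (z x) / psi (y x) - 1) \<longlongrightarrow> 0) F"
    by (rule Lim_null_comparison)
qed

lemma asymp_equiv_psi:
  fixes v y :: "'a \<Rightarrow> real"
  assumes v: "\<forall>\<^sub>F x in F. 0 < v x \<and> v x < 2" and e: "0 < e" and y: "\<forall>\<^sub>F x in F. e \<le> y x"
    and rate: "((\<lambda>x. (2 - v x)\<^sup>2 / (8 * v x) - y x) \<longlongrightarrow> 0) F"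
  shows "v \<sim>[F] (\<lambda>x. psi (y x))"
proof (rule asymp_equivI')
  have "\<forall>\<^sub>F x in F. 0 \<le> (2 - v x)\<^sup>2 / (8 * v x)" using v by eventually_elim simp
  then have "((\<lambda>x. psi ((2 - v x)\<^sup>2 / (8 * v x)) / psi (y x)) \<longlongrightarrow> 1) F"
    by (rule psi_ratio_tendsto_1[OF e y _ rate])
  moreover have "\<forall>\<^sub>F x in F. psi ((2 - v x)\<^sup>2 / (8 * v x)) / psi (y x) = v x / psi (y x)"
    using v by eventually_elim (simp add: psi_inverse)
  ultimately show "((\<lambda>x. v x / psi (y x)) \<longlongrightarrow> 1) F" by (rule Lim_transform_eventually)
qed

section \<open>Implied volatility of exponentially decaying prices\<close>

lemma implied_vol_sq_le:
  fixes c :: "real \<Rightarrow> real"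
  assumes c: "\<And>k. 0 < c k" "\<And>k. c k < 1" and \<epsilon>: "0 < \<epsilon>"
    and decay: "\<And>k. ln (c k) \<le> a - \<epsilon> * k"
  shows "\<exists>\<eta>>0. \<forall>\<^sub>F k in at_top. (implied_vol k (c k))\<^sup>2 \<le> (2 - \<eta>) * k"
proof -
  define \<eta> where "\<eta> = min 1 \<epsilon>"
  have \<eta>: "0 < \<eta>" "\<eta> \<le> 1" "\<eta> \<le> \<epsilon>" using \<epsilon> by (auto simp: \<eta>_def)
  have "\<forall>\<^sub>F k in at_top. a + 6 + ln k / 2 < 7 / 8 * (\<epsilon> * k)" using \<epsilon> by real_asymp
  then have "\<forall>\<^sub>F k in at_top. (implied_vol k (c k))\<^sup>2 \<le> (2 - \<eta>) * k"
    using eventually_ge_at_top[of 4]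
  proof eventually_elim
    case (elim k)
    define V where "V = implied_vol k (c k)"
    have V: "0 < V" "c_BS k V = c k"
      using implied_vol_spec[of k "c k"] c elim(2) by (auto simp: V_def)
    show ?case
    proof (rule ccontr)
      assume "\<not> (implied_vol k (c k))\<^sup>2 \<le> (2 - \<eta>) * k"
      then have "- \<eta> * k / 8 - ln k / 2 - 6 \<le> ln (c k)"
        using ln_c_BS_ge_large_vol[OF elim(2) \<eta>(1,2) V(1)] V(2) by (simp add: V_def)
      moreover have "\<eta> * k \<le> \<epsilon> * k" using \<eta> elim(2) by (intro mult_right_mono) auto
      moreover have "- \<eta> * k / 8 = - (\<eta> * k) / 8" by simp
      ultimately show False using decay[of k] elim(1) by linarith
    qed
  qed
  with \<eta>(1) show ?thesis by blast
qed

lemma eventually_half_rate_le: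
  fixes f :: "real \<Rightarrow> real"
  assumes \<epsilon>: "0 < \<epsilon>" and decay: "\<And>k. f k \<le> a - \<epsilon> * k"
  shows "\<forall>\<^sub>F k in at_top. \<epsilon> / 2 \<le> - f k / k"
proof -
  have "\<forall>\<^sub>F k in at_top. a / k \<le> \<epsilon> / 2" using \<epsilon> by real_asymp
  then show ?thesis using eventually_gt_at_top[of 0]
  proof eventually_elim
    case (elim k)
    have "\<epsilon> - a / k = (\<epsilon> * k - a) / k" using elim(2) by (simp add: field_simps)
    also have "\<dots> \<le> - f k / k" using decay[of k] elim(2) by (intro divide_right_mono) auto
    finally show ?case using elim(1) by linarith
  qed
qed

lemma implied_vol_error_bound:
  fixes c V :: "real \<Rightarrow> real"
  assumes c: "\<And>k. 0 < c k" "\<And>k. c k < 1" and \<epsilon>: "0 < \<epsilon>"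
    and decay: "\<And>k. ln (c k) \<le> a - \<epsilon> * k"
    and growth: "\<forall>\<^sub>F k in at_top. ln (- ln (c k)) \<le> A + B * ln k"
    and V_def: "V = (\<lambda>k. implied_vol k (c k))"
  shows "\<exists>K. \<forall>\<^sub>F k in at_top.
    \<bar>ln (c k) / k - (- k / (2 * (V k)\<^sup>2) + 1 / 2 - (V k)\<^sup>2 / (8 * k))\<bar> \<le> K * (ln k / k)"
proof -
  obtain \<eta> where \<eta>: "0 < \<eta>" and small_vol: "\<forall>\<^sub>F k in at_top. (V k)\<^sup>2 \<le> (2 - \<eta>) * k"
    using implied_vol_sq_le[OF c \<epsilon> decay] unfolding V_def by blast
  define K where "K = 3 * (3 + \<bar>A\<bar> + \<bar>B\<bar>) + 8"
  have "\<forall>\<^sub>F k in at_top.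
    \<bar>ln (c k) / k - (- k / (2 * (V k)\<^sup>2) + 1 / 2 - (V k)\<^sup>2 / (8 * k))\<bar> \<le> K * (ln k / k)"
    using small_vol growth eventually_ge_at_top[of 4]
  proof eventually_elim
    case (elim k)
    define L where "L = ln (c k) + (k\<^sup>2 / (2 * (V k)\<^sup>2) - k / 2 + (V k)\<^sup>2 / 8)"
    have V: "0 < V k" "c_BS k (V k) = c k"
      using implied_vol_spec[of k "c k"] c elim(3) by (auto simp: V_def)
    have "\<eta> * k \<ge> 0" using \<eta> elim(3) by simp
    then have "(V k)\<^sup>2 \<le> 2 * k" using elim(1) by (simp add: algebra_simps)
    then have "\<bar>L\<bar> \<le> K * ln k"
      using ln_c_BS_expansion[OF elim(3) V(1)] elim(2) V(2) by (simp add: K_def L_def)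
    have "ln (c k) / k - (- k / (2 * (V k)\<^sup>2) + 1 / 2 - (V k)\<^sup>2 / (8 * k)) = L / k"
      using V(1) elim(3) by (simp add: L_def field_simps power2_eq_square)
    also have "\<bar>\<dots>\<bar> = \<bar>L\<bar> / k" using elim(3) by (simp add: abs_div)
    also have "\<dots> \<le> K * ln k / k" using \<open>\<bar>L\<bar> \<le> K * ln k\<close> elim(3) by (intro divide_right_mono) auto
    finally show ?case by simp
  qed
  then show ?thesis by blast
qed

lemma implied_vol_bigo:
  fixes c V :: "real \<Rightarrow> real"
  assumes c: "\<And>k. 0 < c k" "\<And>k. c k < 1" and \<epsilon>: "0 < \<epsilon>"
    and decay: "\<And>k. ln (c k) \<le> a - \<epsilon> * k"
    and growth: "\<forall>\<^sub>F k in at_top. ln (- ln (c k)) \<le> A + B * ln k"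
    and V_def: "V = (\<lambda>k. implied_vol k (c k))"
  shows "(\<lambda>k. ln (c k) / k - (- k / (2 * (V k)\<^sup>2) + 1 / 2 - (V k)\<^sup>2 / (8 * k)))
    \<in> O[at_top](\<lambda>k. ln k / k)"
proof -
  obtain K where "\<forall>\<^sub>F k in at_top.
      \<bar>ln (c k) / k - (- k / (2 * (V k)\<^sup>2) + 1 / 2 - (V k)\<^sup>2 / (8 * k))\<bar> \<le> K * (ln k / k)"
    using implied_vol_error_bound[OF c \<epsilon> decay growth V_def] by blast
  then have "\<forall>\<^sub>F k in at_top.
      norm (ln (c k) / k - (- k / (2 * (V k)\<^sup>2) + 1 / 2 - (V k)\<^sup>2 / (8 * k))) \<le> K * norm (ln k / k)"
    using eventually_ge_at_top[of 1] by eventually_elim simp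
  then show ?thesis by (rule bigoI)
qed

lemma implied_vol_asymp_equiv:
  fixes c V :: "real \<Rightarrow> real"
  assumes c: "\<And>k. 0 < c k" "\<And>k. c k < 1" and \<epsilon>: "0 < \<epsilon>"
    and decay: "\<And>k. ln (c k) \<le> a - \<epsilon> * k"
    and growth: "\<forall>\<^sub>F k in at_top. ln (- ln (c k)) \<le> A + B * ln k"
    and V_def: "V = (\<lambda>k. implied_vol k (c k))"
  shows "(\<lambda>k. (V k)\<^sup>2 / k) \<sim>[at_top] (\<lambda>k. psi (- ln (c k) / k))"
proof -
  define r where "r = (\<lambda>k. ln (c k) / k - (- k / (2 * (V k)\<^sup>2) + 1 / 2 - (V k)\<^sup>2 / (8 * k)))"
  obtain K where "\<forall>\<^sub>F k in at_top. \<bar>r k\<bar> \<le> K * (ln k / k)"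
    using implied_vol_error_bound[OF c \<epsilon> decay growth V_def] unfolding r_def by blast
  then have "\<forall>\<^sub>F k in at_top. norm (r k) \<le> K * (ln k / k)" by simp
  moreover have "((\<lambda>k. K * (ln k / k)) \<longlongrightarrow> 0) at_top" by real_asymp
  ultimately have "(r \<longlongrightarrow> 0) at_top" by (rule Lim_null_comparison)
  moreover have "\<forall>\<^sub>F k in at_top.
      r k = (2 - (V k)\<^sup>2 / k)\<^sup>2 / (8 * ((V k)\<^sup>2 / k)) - - ln (c k) / k"
    using eventually_gt_at_top[of 0]
  proof eventually_elim
    case (elim k)
    have "0 < V k" using implied_vol_spec[of k "c k"] c elim by (auto simp: V_def)
    with elim show ?case by (simp add: r_def field_simps power2_eq_square)
  qed
  ultimately have rate: "((\<lambda>k. (2 - (V k)\<^sup>2 / k)\<^sup>2 / (8 * ((V k)\<^sup>2 / k)) - - ln (c k) / k)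
      \<longlongrightarrow> 0) at_top"
    by (rule Lim_transform_eventually)
  obtain \<eta> where \<eta>: "0 < \<eta>" and small_vol: "\<forall>\<^sub>F k in at_top. (V k)\<^sup>2 \<le> (2 - \<eta>) * k"
    using implied_vol_sq_le[OF c \<epsilon> decay] unfolding V_def by blast
  have v: "\<forall>\<^sub>F k in at_top. 0 < (V k)\<^sup>2 / k \<and> (V k)\<^sup>2 / k < 2"
    using small_vol eventually_gt_at_top[of 0]
  proof eventually_elim
    case (elim k)
    have "0 < V k" using implied_vol_spec[of k "c k"] c elim by (auto simp: V_def)
    moreover have "(2 - \<eta>) * k < 2 * k" using \<eta> elim by simp
    then have "(V k)\<^sup>2 < 2 * k" using elim(1) by linarith
    ultimately show ?case using elim by (simp add: divide_less_eq)
  qed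
  show ?thesis
    by (rule asymp_equiv_psi[OF v _ eventually_half_rate_le[OF \<epsilon> decay] rate]) (use \<epsilon> in simp)
qed

section \<open>Call prices and regular variation\<close>

locale call_price =
  fixes \<mu> :: "real measure" and c :: "real \<Rightarrow> real"
  assumes prob: "prob_space \<mu>" and sets: "sets \<mu> = sets borel"
    and int_exp: "integrable \<mu> exp" and mean: "(\<integral>x. exp x \<partial>\<mu>) = 1"
    and c_eq: "c = (\<lambda>k. \<integral>x. indicator {k<..} x * (exp x - exp k) \<partial>\<mu>)"
begin

lemma integrable_payoff: "integrable \<mu> (\<lambda>x. indicator {k<..} x * (exp x - exp k))"
proof (rule Bochner_Integration.integrable_bound[OF int_exp])
  have "(\<lambda>x. indicator {k<..} x * (exp x - exp k)) \<in> borel_measurable borel" by measurable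
  then show "(\<lambda>x. indicator {k<..} x * (exp x - exp k)) \<in> borel_measurable \<mu>"
    using measurable_cong_sets[OF sets refl, of "borel :: real measure"] by simp
  show "AE x in \<mu>. norm (indicator {k<..} x * (exp x - exp k)) \<le> norm (exp x)"
    by (auto simp: indicator_def)
qed

lemma c_nonneg: "c k \<ge> 0"
  unfolding c_eq by (auto intro!: integral_nonneg_AE simp: indicator_def)

lemma c_antimono: "k1 \<le> k2 \<Longrightarrow> c k2 \<le> c k1"
  unfolding c_eq by (intro integral_mono integrable_payoff) (auto simp: indicator_def)

lemma c_less_1: "c k < 1"
proof -
  let ?f = "\<lambda>x. exp x - indicator {k<..} x * (exp x - exp k)"
  have int: "integrable \<mu> ?f" using integrable_payoff int_exp by auto
  have pos: "?f x > 0" for x by (auto simp: indicator_def)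
  have "integral\<^sup>L \<mu> ?f \<noteq> 0"
  proof
    assume "integral\<^sup>L \<mu> ?f = 0"
    then have "AE x in \<mu>. ?f x = 0"
      using integral_nonneg_eq_0_iff_AE[OF int] pos by (auto intro: less_imp_le)
    then have "AE x in \<mu>. False" using pos by (auto elim!: eventually_mono) (metis less_irrefl)
    then show False using prob_space.AE_False[OF prob] by simp
  qed
  moreover have "integral\<^sup>L \<mu> ?f \<ge> 0" using pos by (intro integral_nonneg_AE) (auto intro: less_imp_le)
  moreover have "integral\<^sup>L \<mu> ?f = 1 - c k"
    using mean integrable_payoff int_exp unfolding c_eq by simp
  ultimately show ?thesis by simp
qed

lemma c_le_exp:
  assumes \<epsilon>: "\<epsilon> > 0" and int: "integrable \<mu> (\<lambda>x. exp ((1 + \<epsilon>) * x))"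
  shows "c k \<le> (\<integral>x. exp ((1 + \<epsilon>) * x) \<partial>\<mu>) * exp (- \<epsilon> * k)"
proof -
  have "c k \<le> (\<integral>x. exp ((1 + \<epsilon>) * x) * exp (- \<epsilon> * k) \<partial>\<mu>)"
    unfolding c_eq
  proof (intro integral_mono integrable_payoff integrable_mult_left int)
    fix x
    show "indicator {k<..} x * (exp x - exp k) \<le> exp ((1 + \<epsilon>) * x) * exp (- \<epsilon> * k)"
    proof (cases "k < x")
      case True
      have "exp x - exp k \<le> exp x" by simp
      also have "exp x = exp ((1 + \<epsilon>) * x) * exp (- \<epsilon> * x)"
        by (simp add: exp_add[symmetric] algebra_simps)
      also have "\<dots> \<le> exp ((1 + \<epsilon>) * x) * exp (- \<epsilon> * k)"
        using True \<epsilon> by (intro mult_left_mono) auto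
      finally show ?thesis using True by simp
    qed simp
  qed
  then show ?thesis by simp
qed

lemma c_pos_if_eventually_nonzero:
  assumes "\<forall>\<^sub>F k in at_top. c k \<noteq> 0"
  shows "c k > 0"
proof -
  obtain K where K: "\<And>x. x \<ge> K \<Longrightarrow> c x \<noteq> 0"
    using assms unfolding eventually_at_top_linorder by blast
  have "c (max k K) \<le> c k" by (intro c_antimono) simp
  moreover have "c (max k K) > 0" using K[of "max k K"] c_nonneg[of "max k K"] by simp
  ultimately show ?thesis by simp
qed

lemma ln_c_le_linear:
  assumes \<epsilon>: "\<epsilon> > 0" "integrable \<mu> (\<lambda>x. exp ((1 + \<epsilon>) * x))" and c_pos: "\<And>k. c k > 0"
  shows "\<exists>a. \<forall>k. ln (c k) \<le> a - \<epsilon> * k"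
proof -
  define M where "M = (\<integral>x. exp ((1 + \<epsilon>) * x) \<partial>\<mu>)"
  have c_le: "c k \<le> M * exp (- \<epsilon> * k)" for k
    using c_le_exp[OF \<epsilon>] unfolding M_def .
  from c_le[of 0] have "c 0 \<le> M" by simp
  with c_pos[of 0] have "0 < M" by linarith
  have "ln (c k) \<le> ln M - \<epsilon> * k" for k
  proof -
    have "ln (c k) \<le> ln (M * exp (- \<epsilon> * k))" using c_le[of k] c_pos[of k] \<open>0 < M\<close> by simp
    also have "\<dots> = ln M - \<epsilon> * k" using \<open>0 < M\<close> by (simp add: ln_mult_pos)
    finally show ?thesis .
  qed
  then show ?thesis by blast
qed

end

lemma doubling_iterate_le:
  fixes g :: "real \<Rightarrow> real"
  assumes "0 \<le> x0" "0 \<le> q" and step: "\<And>x. x0 \<le> x \<Longrightarrow> g (2 * x) \<le> q * g x"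
  shows "g (2 ^ n * x0) \<le> q ^ n * g x0"
proof (induction n)
  case (Suc n)
  have "x0 \<le> 2 ^ n * x0" using assms(1) by (simp add: mult_le_cancel_right1)
  then have "g (2 ^ Suc n * x0) \<le> q * g (2 ^ n * x0)" using step by (simp add: mult.assoc)
  also have "\<dots> \<le> q * (q ^ n * g x0)" using Suc assms(2) by (intro mult_left_mono)
  finally show ?case by (simp add: mult.assoc)
qed simp

lemma ln_le_linear_ln_if_doubling:
  fixes g :: "real \<Rightarrow> real"
  assumes mono: "mono g" and pos: "\<forall>\<^sub>F x in at_top. 0 < g x"
    and doubling: "((\<lambda>x. g (2 * x) / g x) \<longlongrightarrow> L) at_top"
  shows "\<exists>A B. \<forall>\<^sub>F x in at_top. ln (g x) \<le> A + B * ln x"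
proof -
  define q where "q = max 2 (L + 1)"
  have q: "1 < q" "L < q" by (auto simp: q_def)
  have "\<forall>\<^sub>F x in at_top. g (2 * x) / g x < q \<and> 0 < g x \<and> 1 \<le> x"
    using order_tendstoD(2)[OF doubling q(2)] pos eventually_ge_at_top[of 1]
    by eventually_elim auto
  then obtain x0 where x0: "\<And>x. x \<ge> x0 \<Longrightarrow> g (2 * x) / g x < q \<and> 0 < g x \<and> 1 \<le> x"
    unfolding eventually_at_top_linorder by blast
  have x0_ge: "1 \<le> x0" "0 < g x0" using x0[of x0] by auto
  have step: "g (2 * x) \<le> q * g x" if "x0 \<le> x" for x
    using x0[OF that] by (simp add: divide_less_eq split: if_splits)
  have iter: "g (2 ^ n * x0) \<le> q ^ n * g x0" for n
    using x0_ge q by (intro doubling_iterate_le step) auto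
  have "ln (g x) \<le> ln q + ln (g x0) + ln q / ln 2 * ln x" if x: "x \<ge> x0" for x
  proof -
    define n where "n = nat \<lceil>log 2 (x / x0)\<rceil>"
    have log: "0 \<le> log 2 (x / x0)" "log 2 (x / x0) \<le> ln x / ln 2"
      using x x0_ge by (auto simp: log_def ln_div divide_right_mono)
    have "x / x0 = 2 powr (log 2 (x / x0))" using x x0_ge by simp
    also have "\<dots> \<le> 2 ^ n" unfolding n_def using log by (simp add: powr_realpow[symmetric])
    finally have "x \<le> 2 ^ n * x0" using x0_ge by (simp add: divide_le_eq)
    then have "g x \<le> g (2 ^ n * x0)" by (rule monoD[OF mono])
    also have "\<dots> \<le> q ^ n * g x0" by (rule iter)
    finally have "ln (g x) \<le> ln (q ^ n * g x0)" using x0[OF x] by simp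
    also have "\<dots> = n * ln q + ln (g x0)" using q x0_ge by (simp add: ln_mult_pos ln_realpow)
    finally have "ln (g x) \<le> n * ln q + ln (g x0)" .
    moreover have "real n \<le> log 2 (x / x0) + 1" unfolding n_def using log by linarith
    then have "n * ln q \<le> (ln x / ln 2 + 1) * ln q" using log q by (intro mult_right_mono) auto
    ultimately show ?thesis by (simp add: algebra_simps)
  qed
  then show ?thesis unfolding eventually_at_top_linorder by blast
qed

theorem lemma3:
  fixes \<mu> :: "real measure" and c V :: "real \<Rightarrow> real" and \<alpha> :: real
  assumes prob: "prob_space \<mu>" and sets: "sets \<mu> = sets borel"
    and int_exp: "integrable \<mu> exp" and mean: "(\<integral>x. exp x \<partial>\<mu>) = 1"
    and moment: "\<exists>\<epsilon>>0. integrable \<mu> (\<lambda>x. exp ((1 + \<epsilon>) * x))"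
    and c_def: "c = (\<lambda>k. \<integral>x. indicator {k<..} x * (exp x - exp k) \<partial>\<mu>)"
    and V_def: "V = (\<lambda>k. implied_vol k (c k))"
    and alpha: "\<alpha> \<ge> 1" and RV: "regvar \<alpha> (\<lambda>k. - ln (c k))"
  shows "((\<lambda>k. ln (c k) / k - (- k / (2 * (V k)\<^sup>2) + 1 / 2 - (V k)\<^sup>2 / (8 * k)))
           \<in> O[at_top](\<lambda>k. ln k / k)) \<and>
         ((\<lambda>k. (V k)\<^sup>2 / k) \<sim>[at_top] (\<lambda>k. psi (- ln (c k) / k)))"
proof -
  interpret call_price \<mu> c by (rule call_price.intro) fact+
  obtain \<epsilon> where \<epsilon>: "0 < \<epsilon>" and moment_\<epsilon>: "integrable \<mu> (\<lambda>x. exp ((1 + \<epsilon>) * x))"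
    using moment by blast
  \<comment> \<open>Regular variation is used only through its doubling limit.\<close>
  have RV_pos: "\<forall>\<^sub>F k in at_top. 0 < - ln (c k)"
    and RV_doubling: "((\<lambda>k. - ln (c (2 * k)) / - ln (c k)) \<longlongrightarrow> 2 powr \<alpha>) at_top"
    using RV unfolding regvar_def by auto
  have c_pos: "0 < c k" for k
    using RV_pos by (intro c_pos_if_eventually_nonzero) (auto elim: eventually_mono)
  obtain a where decay: "\<And>k. ln (c k) \<le> a - \<epsilon> * k"
    using ln_c_le_linear[OF \<epsilon> moment_\<epsilon> c_pos] by blast
  have "mono (\<lambda>k. - ln (c k))" using c_antimono c_pos by (auto intro!: monoI)
  then obtain A B where growth: "\<forall>\<^sub>F k in at_top. ln (- ln (c k)) \<le> A + B * ln k"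
    using ln_le_linear_ln_if_doubling[OF _ RV_pos RV_doubling] by blast
  show ?thesis
    using implied_vol_bigo[OF c_pos c_less_1 \<epsilon> decay growth V_def]
      implied_vol_asymp_equiv[OF c_pos c_less_1 \<epsilon> decay growth V_def] ..
qed

end
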